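(* Fix real numbers $a$, $b>0$, $c>0$, and let $P(x,y)=\tfrac12+(x-y)\bigl(c-b(x+y)+axy\bigr)$. Let $\mathcal D=\{(x,y)\in\mathbb R_+^2: 0<P(x,y)<1\}$. Then $\mathcal D$ is a non-convex set that contains the diagonal $\{(x,x):x\ge 0\}$, is symmetric with respect to the reflection $(x,y)\mapsto(y,x)$, is unbounded along the diagonal, and is bounded along every non-diagonal ray in $\mathbb R_+^2$, i.e. for every $(u,v)\in\mathbb R_+^2$ with $u\neq v$, the set $\{r\ge 0: (ru,rv)\in\mathcal D\}$ is bounded.
   Context: $\mathbb R_+=[0,\infty)$. *)

theory Defs
  imports "HOL-Analysis.Analysis"
begin

definition Ppoly :: "real \<Rightarrow> real \<Rightarrow> real \<Rightarrow> real \<Rightarrow> real \<Rightarrow> real" where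
  "Ppoly a b c x y = 1/2 + (x - y) * (c - b * (x + y) + a * x * y)"

definition Dset :: "real \<Rightarrow> real \<Rightarrow> real \<Rightarrow> (real \<times> real) set" where
  "Dset a b c = {(x, y). 0 \<le> x \<and> 0 \<le> y \<and> 0 < Ppoly a b c x y \<and> Ppoly a b c x y < 1}"

end

theory Submission
  imports Defs "HOL-Computational_Algebra.Polynomial"
begin

text \<open>
  The identities \<open>P(y,x) = 1 - P(x,y)\<close> and \<open>P(x,x) = 1/2\<close> give the symmetry and the
  diagonal. Membership in \<open>\<D>\<close> forces \<open>\<bar>P\<bar> < 1\<close>, whereas a nonconstant real polynomial
  has modulus at most 1 only on a bounded set. On the ray through \<open>(u,v)\<close>, \<open>u \<noteq> v\<close>,
  \<open>P\<close> is a polynomial in \<open>r\<close> with \<open>r\<^sup>2\<close>-coefficient \<open>-b(u-v)(u+v) \<noteq> 0\<close>. At the midpoint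
  of \<open>(c/b, 0) \<in> \<D>\<close> and \<open>(m,m) \<in> \<D>\<close>, \<open>P\<close> is a polynomial in \<open>m\<close> of degree 2 if
  \<open>a \<noteq> 0\<close> and with slope \<open>-c/2\<close> if \<open>a = 0\<close>, so for large \<open>m\<close> that midpoint is not in \<open>\<D>\<close>.
\<close>

lemma not_bounded_atLeast: "\<not> bounded {a::real..}"
proof
  assume "bounded {a..}"
  then obtain M where "{a..} \<subseteq> {..M}"
    using bounded_imp_bdd_above by (auto simp: bdd_above_def subset_eq)
  then show False
    by simp
qed

lemma bounded_poly_sublevel:
  fixes p :: "'a::real_normed_field poly"
  assumes "degree p > 0"
  shows "bounded {x. norm (poly p x) \<le> B}"
proof -
  have "\<forall>\<^sub>F x in at_infinity. norm (poly p x) > B"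
    using filterlim_at_infinity_imp_norm_at_top[OF filterlim_poly_at_infinity[OF assms]]
    by (simp add: filterlim_at_top_dense)
  then obtain R where "\<And>x. norm x \<ge> R \<Longrightarrow> norm (poly p x) > B"
    by (auto simp: eventually_at_infinity)
  then have "{x. norm (poly p x) \<le> B} \<subseteq> ball 0 R"
    by (force simp: not_le)
  then show ?thesis
    using bounded_ball bounded_subset by blast
qed

lemma Ppoly_swap: "Ppoly a b c y x = 1 - Ppoly a b c x y"
  by (simp add: Ppoly_def algebra_simps)

lemma Ppoly_diagonal: "Ppoly a b c x x = 1/2"
  by (simp add: Ppoly_def)

lemma Dset_swap_iff: "(y, x) \<in> Dset a b c \<longleftrightarrow> (x, y) \<in> Dset a b c"
  using Ppoly_swap[of a b c y x] by (auto simp: Dset_def)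

lemma diagonal_subset_Dset: "{(x, x) | x. x \<ge> 0} \<subseteq> Dset a b c"
  by (auto simp: Dset_def Ppoly_diagonal)

lemma abs_Ppoly_less_one_if_in_Dset: "(x, y) \<in> Dset a b c \<Longrightarrow> \<bar>Ppoly a b c x y\<bar> < 1"
  by (auto simp: Dset_def)

lemma Ppoly_ray:
  "Ppoly a b c (r * u) (r * v) =
     poly [:1/2, (u - v) * c, - (u - v) * b * (u + v), (u - v) * a * u * v:] r"
  by (simp add: Ppoly_def algebra_simps power2_eq_square)

lemma bounded_Dset_ray:
  fixes u v :: real
  assumes "b > 0" "u \<ge> 0" "v \<ge> 0" "u \<noteq> v"
  shows "bounded {r. r \<ge> 0 \<and> (r * u, r * v) \<in> Dset a b c}"
proof -
  define p where "p = [:1/2, (u - v) * c, - (u - v) * b * (u + v), (u - v) * a * u * v:]"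
  have "coeff p 2 \<noteq> 0"
    using assms by (simp add: p_def numeral_2_eq_2 add_nonneg_eq_0_iff)
  then have "degree p > 0"
    using le_degree[of p 2] by linarith
  moreover have "{r. r \<ge> 0 \<and> (r * u, r * v) \<in> Dset a b c} \<subseteq> {r. norm (poly p r) \<le> 1}"
  proof
    fix r
    assume "r \<in> {r. r \<ge> 0 \<and> (r * u, r * v) \<in> Dset a b c}"
    then have "\<bar>Ppoly a b c (r * u) (r * v)\<bar> < 1"
      by (simp add: abs_Ppoly_less_one_if_in_Dset)
    then show "r \<in> {r. norm (poly p r) \<le> 1}"
      by (simp add: p_def Ppoly_ray)
  qed
  ultimately show ?thesis
    using bounded_poly_sublevel bounded_subset by blast
qed

lemma Ppoly_midpoint:
  assumes "b \<noteq> 0"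
  shows "Ppoly a b c ((c/b + m) / 2) (m / 2) =
     poly [:1/2 + c\<^sup>2 / (4*b), c / (2*b) * (a*c / (4*b) - b), a*c / (8*b):] m"
  using assms by (simp add: Ppoly_def field_simps power2_eq_square)

lemma not_convex_Dset:
  assumes "b > 0" "c > 0"
  shows "\<not> convex (Dset a b c)"
proof
  assume convex: "convex (Dset a b c)"
  define q where "q = [:1/2 + c\<^sup>2 / (4*b), c / (2*b) * (a*c / (4*b) - b), a*c / (8*b):]"
  have "coeff q 1 \<noteq> 0 \<or> coeff q 2 \<noteq> 0"
    using assms by (cases "a = 0") (simp_all add: q_def numeral_2_eq_2)
  then have "degree q > 0"
    using le_degree[of q 1] le_degree[of q 2] by linarith
  then have "\<not> {0..} \<subseteq> {m. norm (poly q m) \<le> 1}"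
    using bounded_poly_sublevel bounded_subset not_bounded_atLeast by blast
  then obtain m where m: "m \<ge> 0" "\<bar>poly q m\<bar> > 1"
    by (auto simp: subset_eq not_le)
  have left: "(c/b, 0) \<in> Dset a b c"
    using assms by (simp add: Dset_def Ppoly_def)
  have right: "(m, m) \<in> Dset a b c"
    using diagonal_subset_Dset m by blast
  have "(1/2::real) *\<^sub>R (c/b, 0) + (1/2::real) *\<^sub>R (m, m) \<in> Dset a b c"
    using convexD[OF convex left right, of "1/2" "1/2"] by simp
  then have "((c/b + m) / 2, m / 2) \<in> Dset a b c"
    by (simp add: add_divide_distrib mult.commute)
  then have "\<bar>Ppoly a b c ((c/b + m) / 2) (m / 2)\<bar> < 1"
    by (rule abs_Ppoly_less_one_if_in_Dset)
  moreover have "Ppoly a b c ((c/b + m) / 2) (m / 2) = poly q m"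
    unfolding q_def using assms by (intro Ppoly_midpoint) simp
  ultimately show False
    using m by simp
qed

theorem mainTheorem2:
  fixes a b c :: real
  assumes "b > 0" and "c > 0"
  shows "\<not> convex (Dset a b c) \<and>
         {(x, x) | x. x \<ge> 0} \<subseteq> Dset a b c \<and>
         (\<forall>x y. (x, y) \<in> Dset a b c \<longleftrightarrow> (y, x) \<in> Dset a b c) \<and>
         \<not> bounded {r::real. r \<ge> 0 \<and> (r, r) \<in> Dset a b c} \<and>
         (\<forall>u v. u \<ge> 0 \<and> v \<ge> 0 \<and> u \<noteq> v \<longrightarrow>
           bounded {r::real. r \<ge> 0 \<and> (r * u, r * v) \<in> Dset a b c})"
proof -
  have "{r. r \<ge> 0 \<and> (r, r) \<in> Dset a b c} = {0..}"
    by (auto simp: Dset_def Ppoly_diagonal)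
  then show ?thesis
    using assms not_convex_Dset diagonal_subset_Dset Dset_swap_iff not_bounded_atLeast
      bounded_Dset_ray by auto
qed

end
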